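(* Let $f\in\mathbb C[x_1,\dots,x_n]$ be nonzero, $\ell\in\mathbb N$, let $\tau$ be a face of $\Gamma(f)$ and let $\omega$ lie in the relative interior of $C_\tau$, $\omega\neq0$. For $1\le i\le n$ put $\lambda_i=\max\{\gamma_i:\gamma\in\tau\cap\mathrm{Supp}(f)\}$. Then $$\partial_i^{\ell\lambda_i+1}\in\mathrm{in}_{(-\omega,\omega)}\big(\mathrm{Ann}(f^\ell)\big)\quad(1\le i\le n),$$ and for every $v\in V_\tau$ and every $\gamma_\tau\in\tau$, $$\sum_{j=1}^n v_jx_j\partial_j-\ell\langle v,\gamma_\tau\rangle\in\mathrm{in}_{(-\omega,\omega)}\big(\mathrm{Ann}(f^\ell)\big).$$
   Context: $D_n$ is the $n$-th Weyl algebra ($\partial_ix_j=x_j\partial_i+\delta_{ij}$); ideals are left ideals. For $\omega\in\mathbb R^n$, the $(-\omega,\omega)$-weight of $x^\alpha\partial^\beta$ is $-\langle\omega,\alpha\rangle+\langle\omega,\beta\rangle$; $\mathrm{in}_{(-\omega,\omega)}(P)$ is the sum of the terms of maximal weight of the normally ordered expression of $P$, and $\mathrm{in}_{(-\omega,\omega)}(I)$ is the left ideal generated by the $\mathrm{in}_{(-\omega,\omega)}(P)$, $P\in I\setminus\{0\}$. $\mathrm{Ann}(f^\ell)=\{P\in D_n:P\bullet f^\ell=0\}$ with $x_i\bullet g=x_ig$, $\partial_i\bullet g=\partial g/\partial x_i$. For $f=\sum_\gamma c_\gamma x^\gamma$: $\mathrm{Supp}(f)=\{\gamma:c_\gamma\ne0\}$,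 $\Gamma(f)$ its convex hull, $\mathrm{ord}_f(\omega)=\min\{\langle\gamma,\omega\rangle:\gamma\in\Gamma(f)\}$; faces are $\tau_\omega=\{u\in\Gamma(f):\langle u,\omega\rangle=\mathrm{ord}_f(\omega)\}$; for a face $\tau$, $C_\tau=\{\omega:\langle u,\omega\rangle=\mathrm{ord}_f(\omega)\ \forall u\in\tau\}$ and $V_\tau=\{v\in\mathbb R^n:\langle v,\gamma\rangle=\langle v,\gamma'\rangle\ \forall\gamma,\gamma'\in\tau\cap\mathrm{Supp}(f)\}$. $\mathbb N=\{0,1,2,\dots\}$. *)

theory Defs
  imports "HOL-Analysis.Analysis" "HOL-Library.Poly_Mapping"
begin

text \<open>Variables are indexed by a finite type 'n (so n = CARD('n)).
  Exponent vectors: 'n =>0 nat.  Polynomials in C[x_1..x_n]: ('n =>0 nat) =>0 complex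
  (the library's convolution ring structure).\<close>

type_synonym 'n cpoly = "('n \<Rightarrow>\<^sub>0 nat) \<Rightarrow>\<^sub>0 complex"

text \<open>Elements of the Weyl algebra D_n in normally ordered form
  sum c_{a,b} x^a \<partial>^b, represented by their coefficient map on pairs (a,b).\<close>

type_synonym 'n weyl = "(('n \<Rightarrow>\<^sub>0 nat) \<times> ('n \<Rightarrow>\<^sub>0 nat)) \<Rightarrow>\<^sub>0 complex"

text \<open>Product of normally ordered monomials:
  x^a \<partial>^b \<cdot> x^c \<partial>^d = sum_{k \<le> b, k \<le> c} prod_i k_i! C(b_i,k_i) C(c_i,k_i) x^(a+c-k) \<partial>^(b+d-k).\<close>

definition weyl_mono_mult ::
  "complex \<Rightarrow> ('n::finite \<Rightarrow>\<^sub>0 nat) \<Rightarrow> ('n \<Rightarrow>\<^sub>0 nat) \<Rightarrow> ('n \<Rightarrow>\<^sub>0 nat) \<Rightarrow> ('n \<Rightarrow>\<^sub>0 nat) \<Rightarrow> 'n weyl" where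
  "weyl_mono_mult s a b c d =
     (\<Sum>k\<in>{k. \<forall>i. Poly_Mapping.lookup k i \<le> Poly_Mapping.lookup b i \<and> Poly_Mapping.lookup k i \<le> Poly_Mapping.lookup c i}.
        Poly_Mapping.single (a + c - k, b + d - k)
          (s * of_nat (\<Prod>i\<in>UNIV. fact (Poly_Mapping.lookup k i) * (Poly_Mapping.lookup b i choose Poly_Mapping.lookup k i)
                                * (Poly_Mapping.lookup c i choose Poly_Mapping.lookup k i))))"

definition weyl_mult :: "'n::finite weyl \<Rightarrow> 'n weyl \<Rightarrow> 'n weyl" where
  "weyl_mult P Q =
     (\<Sum>p\<in>Poly_Mapping.keys P. \<Sum>q\<in>Poly_Mapping.keys Q.
        weyl_mono_mult (Poly_Mapping.lookup P p * Poly_Mapping.lookup Q q) (fst p) (snd p) (fst q) (snd q))"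

inductive_set left_ideal_gen :: "'n::finite weyl set \<Rightarrow> 'n weyl set" for S where
  zero: "0 \<in> left_ideal_gen S"
| step: "J \<in> left_ideal_gen S \<Longrightarrow> P \<in> S \<Longrightarrow> J + weyl_mult Q P \<in> left_ideal_gen S"

text \<open>Action x_i \<bullet> g = x_i g, \<partial>_i \<bullet> g = dg/dx_i:
  x^a \<partial>^b \<bullet> x^c = prod_i (c_i choose b_i) b_i! x^(a+c-b) if b \<le> c, else 0.\<close>
definition weyl_act :: "'n::finite weyl \<Rightarrow> 'n cpoly \<Rightarrow> 'n cpoly" where
  "weyl_act P g =
     (\<Sum>p\<in>Poly_Mapping.keys P. \<Sum>c\<in>Poly_Mapping.keys g.
        (if \<forall>i. Poly_Mapping.lookup (snd p) i \<le> Poly_Mapping.lookup c i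
         then Poly_Mapping.single (fst p + c - snd p)
                (Poly_Mapping.lookup P p * Poly_Mapping.lookup g c *
                 of_nat (\<Prod>i\<in>UNIV. (Poly_Mapping.lookup c i choose Poly_Mapping.lookup (snd p) i) * fact (Poly_Mapping.lookup (snd p) i)))
         else 0))"

definition Ann :: "'n::finite cpoly \<Rightarrow> 'n weyl set" where
  "Ann g = {P. weyl_act P g = 0}"

definition weight :: "real^'n \<Rightarrow> ('n::finite \<Rightarrow>\<^sub>0 nat) \<times> ('n \<Rightarrow>\<^sub>0 nat) \<Rightarrow> real" where
  "weight \<omega> p = - (\<Sum>i\<in>UNIV. \<omega> $ i * real (Poly_Mapping.lookup (fst p) i)) + (\<Sum>i\<in>UNIV. \<omega> $ i * real (Poly_Mapping.lookup (snd p) i))"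

definition initial :: "real^'n \<Rightarrow> 'n::finite weyl \<Rightarrow> 'n weyl" where
  "initial \<omega> P =
     (let m = Max (weight \<omega> ` Poly_Mapping.keys P)
      in \<Sum>p\<in>{p\<in>Poly_Mapping.keys P. weight \<omega> p = m}. Poly_Mapping.single p (Poly_Mapping.lookup P p))"

definition initial_ideal :: "real^'n \<Rightarrow> 'n::finite weyl set \<Rightarrow> 'n weyl set" where
  "initial_ideal \<omega> I = left_ideal_gen {initial \<omega> P | P. P \<in> I \<and> P \<noteq> 0}"

definition expvec :: "('n::finite \<Rightarrow>\<^sub>0 nat) \<Rightarrow> real^'n" where
  "expvec \<alpha> = (\<chi> i. real (Poly_Mapping.lookup \<alpha> i))"

definition Supp :: "'n::finite cpoly \<Rightarrow> (real^'n) set" where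
  "Supp f = expvec ` Poly_Mapping.keys f"

definition Newton :: "'n::finite cpoly \<Rightarrow> (real^'n) set" where
  "Newton f = convex hull (Supp f)"

definition ord_f :: "'n::finite cpoly \<Rightarrow> real^'n \<Rightarrow> real" where
  "ord_f f \<omega> = Inf {u \<bullet> \<omega> | u. u \<in> Newton f}"

definition face_at :: "'n::finite cpoly \<Rightarrow> real^'n \<Rightarrow> (real^'n) set" where
  "face_at f \<omega> = {u \<in> Newton f. u \<bullet> \<omega> = ord_f f \<omega>}"

definition is_face :: "'n::finite cpoly \<Rightarrow> (real^'n) set \<Rightarrow> bool" where
  "is_face f \<tau> \<longleftrightarrow> (\<exists>\<omega>. \<tau> = face_at f \<omega>)"

definition cone_of :: "'n::finite cpoly \<Rightarrow> (real^'n) set \<Rightarrow> (real^'n) set" where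
  "cone_of f \<tau> = {\<omega>. \<forall>u\<in>\<tau>. u \<bullet> \<omega> = ord_f f \<omega>}"

definition V_of :: "'n::finite cpoly \<Rightarrow> (real^'n) set \<Rightarrow> (real^'n) set" where
  "V_of f \<tau> = {v. \<forall>\<gamma>\<in>\<tau> \<inter> Supp f. \<forall>\<gamma>'\<in>\<tau> \<inter> Supp f. v \<bullet> \<gamma> = v \<bullet> \<gamma>'}"

definition lam :: "'n::finite cpoly \<Rightarrow> (real^'n) set \<Rightarrow> 'n \<Rightarrow> nat" where
  "lam f \<tau> i = Max {Poly_Mapping.lookup \<alpha> i | \<alpha>. \<alpha> \<in> Poly_Mapping.keys f \<and> expvec \<alpha> \<in> \<tau>}"

definition dpow :: "'n::finite \<Rightarrow> nat \<Rightarrow> 'n weyl" where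
  "dpow i m = Poly_Mapping.single (0, Poly_Mapping.single i m) 1"

definition euler_op :: "real^'n::finite \<Rightarrow> complex \<Rightarrow> 'n weyl" where
  "euler_op v c =
     (\<Sum>j\<in>UNIV. Poly_Mapping.single (Poly_Mapping.single j 1, Poly_Mapping.single j 1) (complex_of_real (v $ j)))
     - Poly_Mapping.single (0, 0) c"

end

(*
  Put g = f ^ l.  Every exponent of g is a sum of l exponents of f, so its \<omega>-degree is at
  least l * ord_f(\<omega>).  The bound is attained: if \<alpha> is the lexicographically least exponent
  of f of minimal \<omega>-degree, then l \<alpha> has no other decomposition into l exponents of f, so
  the coefficient of x^(l \<alpha>) in g is f_\<alpha>^l.

  A nonzero operator B, homogeneous of (-\<omega>,\<omega>)-weight e, lies in the initial ideal of Ann(g)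
  as soon as every monomial of B \<bullet> g has \<omega>-degree larger than \<langle>\<omega>, \<alpha>\<rangle> - e for some
  exponent \<alpha> of g.  Indeed, on polynomials of bounded degree the operator
  \<Sum>_\<beta> (-1)^|\<beta>| / (\<beta>! \<alpha>!) x^(d+\<beta>) \<partial>^(\<alpha>+\<beta>) sends g to g_\<alpha> x^d, so B \<bullet> g can
  be cancelled by an operator of weight < e, and B is the initial form of the resulting
  annihilator.

  For \<omega> in the relative interior of C_\<tau> the exponents of f of minimal \<omega>-degree are
  exactly those in \<tau>, so an exponent of g of \<omega>-degree l * ord_f(\<omega>) is a sum of l points
  of \<tau> \<inter> Supp(f).  Such monomials are killed by \<partial>_i^(l \<lambda>_i + 1), and they are
  eigenvectors of \<Sum>_j v_j x_j \<partial>_j with eigenvalue l \<langle>v, \<gamma>_\<tau>\<rangle>, because \<langle>v, -\<rangle> is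
  constant on \<tau>.  All other monomials of g have larger \<omega>-degree.
*)

theory Submission
  imports Defs
begin

section \<open>Sums of monomials and powers of polynomials\<close>

lemma sum_single_keys:
  "(\<Sum>k\<in>Poly_Mapping.keys h. Poly_Mapping.single k (Poly_Mapping.lookup h k)) = h"
  by (rule poly_mapping_eqI)
     (simp add: lookup_sum lookup_single when_def in_keys_iff sum.delta' split: if_splits)

lemma single_sum: "Poly_Mapping.single k (sum F A) = (\<Sum>x\<in>A. Poly_Mapping.single k (F x))"
  by (induction A rule: infinite_finite_induct) (auto simp: single_add)

lemma sum_list_map_additive:
  assumes "\<And>a b. \<phi> (a + b) = \<phi> a + \<phi> b" and "\<phi> 0 = 0"
  shows "\<phi> (sum_list as) = (\<Sum>a\<leftarrow>as. \<phi> a)"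
  by (induction as) (simp_all add: assms)

lemma lookup_sum_list: "Poly_Mapping.lookup (sum_list as) i = (\<Sum>a\<leftarrow>as. Poly_Mapping.lookup a i)"
  by (rule sum_list_map_additive) (simp_all add: lookup_add)

lemma sum_list_eq_lower_bound:
  fixes \<phi> :: "'a \<Rightarrow> 'b::ordered_cancel_comm_monoid_add"
  assumes "\<And>a. a \<in> set as \<Longrightarrow> c \<le> \<phi> a" and "(\<Sum>a\<leftarrow>as. \<phi> a) = (\<Sum>a\<leftarrow>as. c)"
    and "a \<in> set as"
  shows "\<phi> a = c"
  using assms
proof (induction as)
  case (Cons b bs)
  have "c \<le> \<phi> b" and bs_le: "(\<Sum>x\<leftarrow>bs. c) \<le> (\<Sum>x\<leftarrow>bs. \<phi> x)"
    using Cons.prems(1) by (auto intro: sum_list_mono)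
  have "\<phi> b = c"
  proof (rule ccontr)
    assume "\<phi> b \<noteq> c"
    with \<open>c \<le> \<phi> b\<close> have "c + (\<Sum>x\<leftarrow>bs. c) < \<phi> b + (\<Sum>x\<leftarrow>bs. \<phi> x)"
      using bs_le by (intro add_less_le_mono) auto
    with Cons.prems(2) show False
      by simp
  qed
  with Cons.prems Cons.IH show ?case
    by auto
qed simp

lemma keys_power_sum_list:
  fixes f :: "'a::comm_monoid_add \<Rightarrow>\<^sub>0 'b::comm_semiring_1"
  assumes "c \<in> Poly_Mapping.keys (f ^ k)"
  shows "\<exists>as. length as = k \<and> set as \<subseteq> Poly_Mapping.keys f \<and> c = sum_list as"
  using assms
proof (induction k arbitrary: c)
  case 0
  then show ?case
    by (simp add: in_keys_iff lookup_one when_def split: if_splits)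
next
  case (Suc k)
  then obtain a b where "c = a + b" "a \<in> Poly_Mapping.keys f" "b \<in> Poly_Mapping.keys (f ^ k)"
    using keys_mult[of f "f ^ k"] by auto
  moreover obtain bs where "length bs = k" "set bs \<subseteq> Poly_Mapping.keys f" "b = sum_list bs"
    using Suc.IH \<open>b \<in> Poly_Mapping.keys (f ^ k)\<close> by blast
  ultimately show ?case
    by (intro exI[of _ "a # bs"]) auto
qed

lemma lookup_mult_unique_decomposition:
  fixes p q :: "'a::comm_monoid_add \<Rightarrow>\<^sub>0 'b::comm_semiring_1"
  assumes unique: "\<And>a b. a \<in> Poly_Mapping.keys p \<Longrightarrow> b \<in> Poly_Mapping.keys q \<Longrightarrow>
      a + b = x + y \<Longrightarrow> a = x \<and> b = y"
  shows "Poly_Mapping.lookup (p * q) (x + y) = Poly_Mapping.lookup p x * Poly_Mapping.lookup q y"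
proof -
  have inner: "(\<Sum>b. Poly_Mapping.lookup q b when x + y = a + b) = (Poly_Mapping.lookup q y when a = x)"
    if "Poly_Mapping.lookup p a \<noteq> 0" for a
  proof -
    have a: "a \<in> Poly_Mapping.keys p"
      using that by (simp add: in_keys_iff)
    have "(Poly_Mapping.lookup q b when x + y = a + b) = ((Poly_Mapping.lookup q b when b = y) when a = x)" for b
    proof (cases "b \<in> Poly_Mapping.keys q")
      case True
      then have "x + y = a + b \<longleftrightarrow> b = y \<and> a = x"
        using unique[OF a] by auto
      then show ?thesis
        by (simp only: when_when)
    qed (simp add: in_keys_iff)
    then show ?thesis
      by (simp add: Sum_any_when_independent)
  qed
  have "Poly_Mapping.lookup (p * q) (x + y)
      = (\<Sum>a. Poly_Mapping.lookup p a * (\<Sum>b. Poly_Mapping.lookup q b when x + y = a + b))"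
    by (rule lookup_mult)
  also have "\<dots> = (\<Sum>a. Poly_Mapping.lookup p a * (Poly_Mapping.lookup q y when a = x))"
  proof (rule Sum_any.cong)
    fix a
    show "Poly_Mapping.lookup p a * (\<Sum>b. Poly_Mapping.lookup q b when x + y = a + b)
        = Poly_Mapping.lookup p a * (Poly_Mapping.lookup q y when a = x)"
      by (cases "Poly_Mapping.lookup p a = 0") (simp_all add: inner)
  qed
  also have "\<dots> = Poly_Mapping.lookup p x * Poly_Mapping.lookup q y"
    by (simp add: mult_when)
  finally show ?thesis .
qed

lemma lookup_power_sum_replicate:
  fixes f :: "'a::comm_monoid_add \<Rightarrow>\<^sub>0 'b::comm_semiring_1"
  assumes unique: "\<And>as. set as \<subseteq> Poly_Mapping.keys f \<Longrightarrow>
      sum_list as = sum_list (replicate (length as) \<alpha>) \<Longrightarrow> set as \<subseteq> {\<alpha>}"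
  shows "Poly_Mapping.lookup (f ^ k) (sum_list (replicate k \<alpha>)) = Poly_Mapping.lookup f \<alpha> ^ k"
proof (induction k)
  case 0
  then show ?case
    by (simp add: lookup_one)
next
  case (Suc k)
  have "a = \<alpha> \<and> b = sum_list (replicate k \<alpha>)"
    if a: "a \<in> Poly_Mapping.keys f" and b: "b \<in> Poly_Mapping.keys (f ^ k)"
      and sum: "a + b = \<alpha> + sum_list (replicate k \<alpha>)" for a b
  proof -
    obtain bs where bs: "length bs = k" "set bs \<subseteq> Poly_Mapping.keys f" "b = sum_list bs"
      using keys_power_sum_list[OF b] by blast
    then have "set (a # bs) \<subseteq> {\<alpha>}"
      using a sum by (intro unique) auto
    then have "a = \<alpha>" "bs = replicate k \<alpha>"
      using bs(1) replicate_length_same[of bs \<alpha>] by force+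
    then show ?thesis
      using bs(3) by simp
  qed
  then have "Poly_Mapping.lookup (f * f ^ k) (\<alpha> + sum_list (replicate k \<alpha>))
      = Poly_Mapping.lookup f \<alpha> * Poly_Mapping.lookup (f ^ k) (sum_list (replicate k \<alpha>))"
    by (rule lookup_mult_unique_decomposition)
  with Suc.IH show ?case
    by simp
qed

section \<open>The action of the Weyl algebra and initial forms\<close>

definition monomial_deriv_coeff :: "('n::finite \<Rightarrow>\<^sub>0 nat) \<Rightarrow> ('n \<Rightarrow>\<^sub>0 nat) \<Rightarrow> nat" where
  "monomial_deriv_coeff c b =
     (\<Prod>i\<in>UNIV. (Poly_Mapping.lookup c i choose Poly_Mapping.lookup b i) * fact (Poly_Mapping.lookup b i))"

definition weyl_mono_act ::
  "('n \<Rightarrow>\<^sub>0 nat) \<times> ('n \<Rightarrow>\<^sub>0 nat) \<Rightarrow> complex \<Rightarrow> ('n::finite \<Rightarrow>\<^sub>0 nat) \<Rightarrow> 'n cpoly" where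
  "weyl_mono_act p s c =
     (if \<forall>i. Poly_Mapping.lookup (snd p) i \<le> Poly_Mapping.lookup c i
      then Poly_Mapping.single (fst p + c - snd p) (s * of_nat (monomial_deriv_coeff c (snd p)))
      else 0)"

lemma weyl_mono_act_zero [simp]: "weyl_mono_act p 0 c = 0"
  by (simp add: weyl_mono_act_def)

lemma weyl_mono_act_add: "weyl_mono_act p (s + t) c = weyl_mono_act p s c + weyl_mono_act p t c"
  by (simp add: weyl_mono_act_def distrib_right single_add)

lemma weyl_mono_act_uminus: "weyl_mono_act p (- s) c = - weyl_mono_act p s c"
  by (simp add: weyl_mono_act_def single_uminus)

lemma weyl_act_eq_sum_mono_act:
  assumes "finite A" "Poly_Mapping.keys P \<subseteq> A"
  shows "weyl_act P g = (\<Sum>p\<in>A. \<Sum>c\<in>Poly_Mapping.keys g.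
           weyl_mono_act p (Poly_Mapping.lookup P p * Poly_Mapping.lookup g c) c)"
proof -
  have "weyl_act P g = (\<Sum>p\<in>Poly_Mapping.keys P. \<Sum>c\<in>Poly_Mapping.keys g.
           weyl_mono_act p (Poly_Mapping.lookup P p * Poly_Mapping.lookup g c) c)"
    unfolding weyl_act_def weyl_mono_act_def monomial_deriv_coeff_def by (simp add: mult.assoc)
  also have "\<dots> = (\<Sum>p\<in>A. \<Sum>c\<in>Poly_Mapping.keys g.
           weyl_mono_act p (Poly_Mapping.lookup P p * Poly_Mapping.lookup g c) c)"
    by (intro sum.mono_neutral_left) (auto simp: assms in_keys_iff)
  finally show ?thesis .
qed

lemma weyl_act_add: "weyl_act (P + Q) g = weyl_act P g + weyl_act Q g"
proof -
  let ?A = "Poly_Mapping.keys P \<union> Poly_Mapping.keys Q"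
  let ?S = "\<lambda>R. \<Sum>p\<in>?A. \<Sum>c\<in>Poly_Mapping.keys g.
             weyl_mono_act p (Poly_Mapping.lookup R p * Poly_Mapping.lookup g c) c"
  have "weyl_act (P + Q) g = ?S (P + Q)"
    by (rule weyl_act_eq_sum_mono_act) (use keys_add[of P Q] in auto)
  moreover have "weyl_act P g = ?S P" "weyl_act Q g = ?S Q"
    by (rule weyl_act_eq_sum_mono_act; auto)+
  ultimately show ?thesis
    by (simp add: lookup_add distrib_right weyl_mono_act_add sum.distrib)
qed

lemma weyl_act_uminus: "weyl_act (- P) g = - weyl_act P g"
  by (simp add: weyl_act_eq_sum_mono_act[of "Poly_Mapping.keys P"] weyl_mono_act_uminus sum_negf)

lemma weyl_act_diff: "weyl_act (P - Q) g = weyl_act P g - weyl_act Q g"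
  unfolding diff_conv_add_uminus weyl_act_add weyl_act_uminus ..

lemma weyl_act_zero [simp]: "weyl_act 0 g = 0"
  by (simp add: weyl_act_def)

lemma weyl_act_sum: "weyl_act (sum F I) g = (\<Sum>i\<in>I. weyl_act (F i) g)"
  by (induction I rule: infinite_finite_induct) (auto simp: weyl_act_add)

lemma weyl_act_single:
  "weyl_act (Poly_Mapping.single p s) g =
     (\<Sum>c\<in>Poly_Mapping.keys g. weyl_mono_act p (s * Poly_Mapping.lookup g c) c)"
  by (simp add: weyl_act_eq_sum_mono_act[of "{p}"])

lemma initial_zero [simp]: "initial \<omega> 0 = 0"
  by (simp add: initial_def)

lemma initial_add_lower_weight:
  assumes B: "\<forall>p\<in>Poly_Mapping.keys B. weight \<omega> p = e"
    and S: "\<forall>p\<in>Poly_Mapping.keys S. weight \<omega> p < e"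
    and "B \<noteq> 0"
  shows "initial \<omega> (B + S) = B"
proof -
  have lookup_eq: "Poly_Mapping.lookup (B + S) p = Poly_Mapping.lookup B p" if "weight \<omega> p = e" for p
    using S that by (force simp: lookup_add in_keys_iff)
  have keys_B: "Poly_Mapping.keys B \<subseteq> Poly_Mapping.keys (B + S)"
    using B lookup_eq by (auto simp: in_keys_iff)
  have keys_BS: "Poly_Mapping.keys (B + S) \<subseteq> Poly_Mapping.keys B \<union> Poly_Mapping.keys S"
    by (rule keys_add)
  have "Max (weight \<omega> ` Poly_Mapping.keys (B + S)) = e"
  proof (rule Max_eqI)
    show "y \<le> e" if "y \<in> weight \<omega> ` Poly_Mapping.keys (B + S)" for y
      using that keys_BS B S by fastforce
    obtain p where "p \<in> Poly_Mapping.keys B"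
      using \<open>B \<noteq> 0\<close> by (metis all_not_in_conv keys_eq_empty)
    then show "e \<in> weight \<omega> ` Poly_Mapping.keys (B + S)"
      using keys_B B by (metis image_eqI subsetD)
  qed simp
  moreover have "{p \<in> Poly_Mapping.keys (B + S). weight \<omega> p = e} = Poly_Mapping.keys B"
    using keys_B keys_BS B S by fastforce
  ultimately have "initial \<omega> (B + S) =
      (\<Sum>p\<in>Poly_Mapping.keys B. Poly_Mapping.single p (Poly_Mapping.lookup (B + S) p))"
    by (simp add: initial_def)
  also have "\<dots> = B"
    using B lookup_eq by (simp add: sum_single_keys cong: sum.cong)
  finally show ?thesis .
qed

lemma weyl_mono_mult_one_left: "weyl_mono_mult s 0 0 c d = Poly_Mapping.single (c, d) s"
proof -
  have "{k. \<forall>i. Poly_Mapping.lookup k i \<le> Poly_Mapping.lookup 0 i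
              \<and> Poly_Mapping.lookup k i \<le> Poly_Mapping.lookup c i} = {0}"
    by (auto intro!: poly_mapping_eqI)
  then show ?thesis
    by (simp add: weyl_mono_mult_def)
qed

lemma weyl_mult_one_left: "weyl_mult (Poly_Mapping.single (0, 0) 1) Q = Q"
  by (simp add: weyl_mult_def weyl_mono_mult_one_left sum_single_keys)

lemma initial_in_initial_ideal:
  assumes "P \<in> I" "P \<noteq> 0"
  shows "initial \<omega> P \<in> initial_ideal \<omega> I"
proof -
  have "0 + weyl_mult (Poly_Mapping.single (0, 0) 1) (initial \<omega> P) \<in> initial_ideal \<omega> I"
    unfolding initial_ideal_def by (intro left_ideal_gen.step left_ideal_gen.zero) (use assms in auto)
  then show ?thesis
    by (simp add: weyl_mult_one_left)
qed

lemma expvec_add: "expvec (a + b) = expvec a + expvec b"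
  by (simp add: expvec_def vec_eq_iff lookup_add)

lemma expvec_zero [simp]: "expvec 0 = 0"
  by (simp add: expvec_def vec_eq_iff)

lemma expvec_sum_list_inner: "expvec (sum_list as) \<bullet> \<omega> = (\<Sum>a\<leftarrow>as. expvec a \<bullet> \<omega>)"
  by (rule sum_list_map_additive) (simp_all add: expvec_add inner_add_left)

lemma inner_expvec_single: "expvec (Poly_Mapping.single i m) \<bullet> \<omega> = real m * \<omega> $ i"
proof -
  have "expvec (Poly_Mapping.single i m) \<bullet> \<omega> = (\<Sum>j\<in>UNIV. if j = i then real m * \<omega> $ i else 0)"
    unfolding inner_vec_def expvec_def by (intro sum.cong) (auto simp: lookup_single)
  then show ?thesis
    by simp
qed

lemma inner_expvec_diff_single:
  assumes "m \<le> Poly_Mapping.lookup c i"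
  shows "expvec (c - Poly_Mapping.single i m) \<bullet> \<omega> = expvec c \<bullet> \<omega> - real m * \<omega> $ i"
proof -
  have "c = (c - Poly_Mapping.single i m) + Poly_Mapping.single i m"
    using assms by (intro poly_mapping_eqI) (auto simp: lookup_add lookup_minus lookup_single when_def)
  then have "expvec c \<bullet> \<omega> = expvec (c - Poly_Mapping.single i m) \<bullet> \<omega> + real m * \<omega> $ i"
    by (metis expvec_add inner_add_left inner_expvec_single)
  then show ?thesis
    by simp
qed

lemma weight_eq: "weight \<omega> (a, b) = expvec b \<bullet> \<omega> - expvec a \<bullet> \<omega>"
  by (simp add: weight_def expvec_def inner_vec_def mult.commute)

section \<open>Extracting a coefficient by a differential operator\<close>

definition exponent_box :: "nat \<Rightarrow> ('n::finite \<Rightarrow>\<^sub>0 nat) set" where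
  "exponent_box N = {\<beta>. \<forall>i. Poly_Mapping.lookup \<beta> i \<le> N}"

lemma bij_betw_lookup_exponent_box:
  "bij_betw Poly_Mapping.lookup (exponent_box N) (PiE UNIV (\<lambda>_. {..N}))"
proof (rule bij_betw_imageI)
  show "inj_on Poly_Mapping.lookup (exponent_box N)"
    by (auto intro: inj_onI)
  have "h \<in> Poly_Mapping.lookup ` exponent_box N" if "h \<in> PiE UNIV (\<lambda>_. {..N})" for h :: "'n::finite \<Rightarrow> nat"
  proof
    show "h = Poly_Mapping.lookup (Abs_poly_mapping h)"
      by simp
    show "Abs_poly_mapping h \<in> exponent_box N"
      using that by (simp add: exponent_box_def PiE_iff)
  qed
  then show "Poly_Mapping.lookup ` exponent_box N = PiE UNIV (\<lambda>_. {..N})"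
    by (auto simp: exponent_box_def PiE_iff)
qed

lemma sum_exponent_box_prod:
  fixes F :: "'n::finite \<Rightarrow> nat \<Rightarrow> 'a::comm_semiring_1"
  shows "(\<Sum>\<beta>\<in>exponent_box N. \<Prod>i\<in>UNIV. F i (Poly_Mapping.lookup \<beta> i)) = (\<Prod>i\<in>UNIV. \<Sum>k\<le>N. F i k)"
proof -
  have "(\<Prod>i\<in>UNIV. \<Sum>k\<le>N. F i k) = (\<Sum>h\<in>PiE UNIV (\<lambda>_. {..N}). \<Prod>i\<in>UNIV. F i (h i))"
    by (rule prod_sum_PiE) auto
  also have "\<dots> = (\<Sum>\<beta>\<in>exponent_box N. \<Prod>i\<in>UNIV. F i (Poly_Mapping.lookup \<beta> i))"
    by (rule sum.reindex_bij_betw[OF bij_betw_lookup_exponent_box, symmetric])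
  finally show ?thesis ..
qed

lemma choose_add_mult_fact:
  assumes "a + k \<le> c"
  shows "(c choose (a + k)) * fact (a + k) = (c choose a) * ((c - a) choose k) * fact a * fact k"
proof -
  have "fact a * fact k * ((a + k) choose a) = (fact (a + k) :: nat)"
    using binomial_fact_lemma[of a "a + k"] by simp
  moreover have "(c choose (a + k)) * ((a + k) choose a) = (c choose a) * ((c - a) choose k)"
    using choose_mult[of a "a + k" c] assms by simp
  ultimately show ?thesis
    by (metis mult.assoc mult.commute)
qed

lemma alternating_choose_sum:
  assumes "c \<le> N"
  shows "(\<Sum>k\<le>N. if a + k \<le> c
            then (-1) ^ k * of_nat ((c choose (a + k)) * fact (a + k)) / of_nat (fact k * fact a)
            else 0) = (if c = a then 1 else (0 :: 'a::field_char_0))"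
proof (cases "a \<le> c")
  case False
  then show ?thesis
    by (auto intro!: sum.neutral)
next
  case True
  define m where "m = c - a"
  have summand: "(-1) ^ k * of_nat ((c choose (a + k)) * fact (a + k)) / of_nat (fact k * fact a)
      = of_nat (c choose a) * ((-1) ^ k * of_nat (m choose k) :: 'a)" if "a + k \<le> c" for k
  proof -
    have "(c choose (a + k)) * fact (a + k) = (c choose a) * (m choose k) * (fact k * fact a)"
      using choose_add_mult_fact[OF that] by (simp add: m_def ac_simps)
    then show ?thesis
      by (simp add: field_simps)
  qed
  have "(\<Sum>k\<le>N. if a + k \<le> c
            then (-1) ^ k * of_nat ((c choose (a + k)) * fact (a + k)) / of_nat (fact k * fact a)
            else 0) = (\<Sum>k\<le>m. of_nat (c choose a) * ((-1) ^ k * of_nat (m choose k)) :: 'a)"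
    using assms True summand by (intro sum.mono_neutral_cong_right) (auto simp: m_def)
  also have "\<dots> = of_nat (c choose a) * (\<Sum>k\<le>m. (-1) ^ k * of_nat (m choose k))"
    by (simp add: sum_distrib_left)
  also have "\<dots> = (if c = a then 1 else 0)"
    using choose_alternating_sum[of m] True by (auto simp: m_def)
  finally show ?thesis .
qed

text \<open>On polynomials whose exponents are bounded by \<open>N\<close>, the operator
  \<open>\<Sum>\<^sub>\<beta> (-1)\<^bsup>|\<beta>|\<^esup> / \<beta>! x\<^sup>\<beta> \<partial>\<^sup>\<beta>\<close> is evaluation at \<open>0\<close> (Taylor's formula);
  composed with \<open>\<partial>\<^sup>\<alpha> / \<alpha>!\<close> and multiplied by \<open>s x\<^sup>d\<close> it maps \<open>h\<close> to \<open>s h\<^sub>\<alpha> x\<^sup>d\<close>.\<close>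

definition extractor_coeff :: "('n::finite \<Rightarrow>\<^sub>0 nat) \<Rightarrow> ('n \<Rightarrow>\<^sub>0 nat) \<Rightarrow> complex" where
  "extractor_coeff \<alpha> \<beta> = (-1) ^ (\<Sum>i\<in>UNIV. Poly_Mapping.lookup \<beta> i)
     / of_nat (\<Prod>i\<in>UNIV. fact (Poly_Mapping.lookup \<beta> i) * fact (Poly_Mapping.lookup \<alpha> i))"

definition coeff_extractor :: "('n::finite \<Rightarrow>\<^sub>0 nat) \<Rightarrow> nat \<Rightarrow> ('n \<Rightarrow>\<^sub>0 nat) \<Rightarrow> complex \<Rightarrow> 'n weyl" where
  "coeff_extractor \<alpha> N d s =
     (\<Sum>\<beta>\<in>exponent_box N. Poly_Mapping.single (d + \<beta>, \<alpha> + \<beta>) (s * extractor_coeff \<alpha> \<beta>))"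

lemma weyl_mono_act_shift:
  "weyl_mono_act (d + \<beta>, \<alpha> + \<beta>) s c = Poly_Mapping.single (d + (c - \<alpha>))
     (if \<forall>i. Poly_Mapping.lookup (\<alpha> + \<beta>) i \<le> Poly_Mapping.lookup c i
      then s * of_nat (monomial_deriv_coeff c (\<alpha> + \<beta>)) else 0)"
proof (cases "\<forall>i. Poly_Mapping.lookup (\<alpha> + \<beta>) i \<le> Poly_Mapping.lookup c i")
  case True
  have "d + \<beta> + c - (\<alpha> + \<beta>) = d + (c - \<alpha>)"
  proof (rule poly_mapping_eqI)
    fix i
    have "Poly_Mapping.lookup \<alpha> i \<le> Poly_Mapping.lookup c i"
      using True[rule_format, of i] by (simp add: lookup_add)
    then show "Poly_Mapping.lookup (d + \<beta> + c - (\<alpha> + \<beta>)) i = Poly_Mapping.lookup (d + (c - \<alpha>)) i"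
      by (simp add: lookup_add lookup_minus)
  qed
  with True show ?thesis
    by (simp add: weyl_mono_act_def)
qed (auto simp: weyl_mono_act_def)

lemma sum_extractor_coeff:
  assumes "\<And>i. Poly_Mapping.lookup c i \<le> N"
  shows "(\<Sum>\<beta>\<in>exponent_box N.
            if \<forall>i. Poly_Mapping.lookup (\<alpha> + \<beta>) i \<le> Poly_Mapping.lookup c i
            then extractor_coeff \<alpha> \<beta> * of_nat (monomial_deriv_coeff c (\<alpha> + \<beta>)) else 0)
         = (if c = \<alpha> then 1 else 0)"
proof -
  define F where "F i k =
    (if Poly_Mapping.lookup \<alpha> i + k \<le> Poly_Mapping.lookup c i
     then (-1) ^ k * of_nat ((Poly_Mapping.lookup c i choose (Poly_Mapping.lookup \<alpha> i + k))
                             * fact (Poly_Mapping.lookup \<alpha> i + k))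
          / of_nat (fact k * fact (Poly_Mapping.lookup \<alpha> i))
     else 0 :: complex)" for i k
  have summand: "(if \<forall>i. Poly_Mapping.lookup (\<alpha> + \<beta>) i \<le> Poly_Mapping.lookup c i
                  then extractor_coeff \<alpha> \<beta> * of_nat (monomial_deriv_coeff c (\<alpha> + \<beta>)) else 0)
      = (\<Prod>i\<in>UNIV. F i (Poly_Mapping.lookup \<beta> i))" for \<beta>
  proof (cases "\<forall>i. Poly_Mapping.lookup (\<alpha> + \<beta>) i \<le> Poly_Mapping.lookup c i")
    case True
    then show ?thesis
      by (simp add: F_def extractor_coeff_def monomial_deriv_coeff_def lookup_add power_sum
          prod.distrib prod_dividef)
  next
    case False
    then obtain i where "\<not> Poly_Mapping.lookup (\<alpha> + \<beta>) i \<le> Poly_Mapping.lookup c i"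
      by blast
    then have "F i (Poly_Mapping.lookup \<beta> i) = 0"
      by (simp add: F_def lookup_add)
    with False show ?thesis
      by (metis (full_types) UNIV_I finite prod_zero)
  qed
  have "(\<Prod>i\<in>UNIV. \<Sum>k\<le>N. F i k) = (\<Prod>i\<in>UNIV. if Poly_Mapping.lookup c i = Poly_Mapping.lookup \<alpha> i then 1 else 0)"
    using assms by (simp add: F_def alternating_choose_sum)
  also have "\<dots> = (if c = \<alpha> then 1 else 0)"
    by (auto simp: poly_mapping_eq_iff fun_eq_iff intro: prod_zero)
  finally show ?thesis
    by (simp add: summand sum_exponent_box_prod)
qed

lemma weyl_act_coeff_extractor:
  assumes "\<And>c i. c \<in> Poly_Mapping.keys h \<Longrightarrow> Poly_Mapping.lookup c i \<le> N"
  shows "weyl_act (coeff_extractor \<alpha> N d s) h = Poly_Mapping.single d (s * Poly_Mapping.lookup h \<alpha>)"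
proof -
  have "weyl_act (coeff_extractor \<alpha> N d s) h =
      (\<Sum>c\<in>Poly_Mapping.keys h. \<Sum>\<beta>\<in>exponent_box N.
         weyl_mono_act (d + \<beta>, \<alpha> + \<beta>) (s * extractor_coeff \<alpha> \<beta> * Poly_Mapping.lookup h c) c)"
    by (simp add: coeff_extractor_def weyl_act_sum weyl_act_single sum.swap[of _ "exponent_box N"])
  also have "\<dots> = (\<Sum>c\<in>Poly_Mapping.keys h.
      Poly_Mapping.single (d + (c - \<alpha>)) (s * Poly_Mapping.lookup h c * (if c = \<alpha> then 1 else 0)))"
  proof (intro sum.cong refl)
    fix c
    assume "c \<in> Poly_Mapping.keys h"
    have "(\<Sum>\<beta>\<in>exponent_box N.
            weyl_mono_act (d + \<beta>, \<alpha> + \<beta>) (s * extractor_coeff \<alpha> \<beta> * Poly_Mapping.lookup h c) c)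
        = Poly_Mapping.single (d + (c - \<alpha>)) (s * Poly_Mapping.lookup h c *
            (\<Sum>\<beta>\<in>exponent_box N.
               if \<forall>i. Poly_Mapping.lookup (\<alpha> + \<beta>) i \<le> Poly_Mapping.lookup c i
               then extractor_coeff \<alpha> \<beta> * of_nat (monomial_deriv_coeff c (\<alpha> + \<beta>)) else 0))"
      unfolding weyl_mono_act_shift single_sum[symmetric] sum_distrib_left
      by (intro arg_cong[where f = "Poly_Mapping.single _"] sum.cong) simp_all
    also have "\<dots> = Poly_Mapping.single (d + (c - \<alpha>)) (s * Poly_Mapping.lookup h c * (if c = \<alpha> then 1 else 0))"
      using assms \<open>c \<in> Poly_Mapping.keys h\<close> by (simp add: sum_extractor_coeff)
    finally show "(\<Sum>\<beta>\<in>exponent_box N.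
            weyl_mono_act (d + \<beta>, \<alpha> + \<beta>) (s * extractor_coeff \<alpha> \<beta> * Poly_Mapping.lookup h c) c)
        = Poly_Mapping.single (d + (c - \<alpha>)) (s * Poly_Mapping.lookup h c * (if c = \<alpha> then 1 else 0))" .
  qed
  also have "\<dots> = Poly_Mapping.single d (s * Poly_Mapping.lookup h \<alpha>)"
    by (cases "\<alpha> \<in> Poly_Mapping.keys h") (auto simp: if_distrib in_keys_iff cong: if_cong)
  finally show ?thesis .
qed

lemma weight_keys_coeff_extractor:
  assumes "p \<in> Poly_Mapping.keys (coeff_extractor \<alpha> N d s)"
  shows "weight \<omega> p = expvec \<alpha> \<bullet> \<omega> - expvec d \<bullet> \<omega>"
proof -
  have "Poly_Mapping.keys (coeff_extractor \<alpha> N d s) \<subseteq> (\<Union>\<beta>\<in>exponent_box N.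
      Poly_Mapping.keys (Poly_Mapping.single (d + \<beta>, \<alpha> + \<beta>) (s * extractor_coeff \<alpha> \<beta>)))"
    unfolding coeff_extractor_def by (rule keys_sum)
  then obtain \<beta> where "p = (d + \<beta>, \<alpha> + \<beta>)"
    using assms by (auto split: if_splits)
  then show ?thesis
    by (simp add: weight_eq expvec_add inner_add_left)
qed

lemma exponents_bounded:
  fixes g :: "'n::finite cpoly"
  obtains N where "\<And>c i. c \<in> Poly_Mapping.keys g \<Longrightarrow> Poly_Mapping.lookup c i \<le> N"
proof -
  have "finite ((\<lambda>(c, i). Poly_Mapping.lookup c i) ` (Poly_Mapping.keys g \<times> UNIV))"
    by simp
  then obtain N where "\<forall>n\<in>(\<lambda>(c, i). Poly_Mapping.lookup c i) ` (Poly_Mapping.keys g \<times> UNIV). n \<le> N"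
    unfolding finite_nat_set_iff_bounded_le by blast
  with that show ?thesis
    by auto
qed

lemma homogeneous_in_initial_Ann:
  fixes g :: "'n::finite cpoly"
  assumes "\<alpha> \<in> Poly_Mapping.keys g" and "B \<noteq> 0"
    and homogeneous: "\<forall>p\<in>Poly_Mapping.keys B. weight \<omega> p = e"
    and higher: "\<And>c. c \<in> Poly_Mapping.keys (weyl_act B g) \<Longrightarrow> expvec \<alpha> \<bullet> \<omega> - e < expvec c \<bullet> \<omega>"
  shows "B \<in> initial_ideal \<omega> (Ann g)"
proof -
  obtain N where N: "\<And>c i. c \<in> Poly_Mapping.keys g \<Longrightarrow> Poly_Mapping.lookup c i \<le> N"
    using exponents_bounded by blast
  define h where "h = weyl_act B g"
  define S where "S = (\<Sum>c\<in>Poly_Mapping.keys h.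
    coeff_extractor \<alpha> N c (- Poly_Mapping.lookup h c / Poly_Mapping.lookup g \<alpha>))"
  have "weyl_act S g = (\<Sum>c\<in>Poly_Mapping.keys h.
      Poly_Mapping.single c (- Poly_Mapping.lookup h c / Poly_Mapping.lookup g \<alpha> * Poly_Mapping.lookup g \<alpha>))"
    unfolding S_def weyl_act_sum by (simp only: weyl_act_coeff_extractor[OF N])
  also have "\<dots> = (\<Sum>c\<in>Poly_Mapping.keys h. Poly_Mapping.single c (- Poly_Mapping.lookup h c))"
    using \<open>\<alpha> \<in> Poly_Mapping.keys g\<close> by (simp add: in_keys_iff)
  also have "\<dots> = - h"
    by (simp add: single_uminus sum_negf sum_single_keys)
  finally have "B + S \<in> Ann g"
    by (simp add: Ann_def weyl_act_add h_def)
  have "weight \<omega> p < e" if p: "p \<in> Poly_Mapping.keys S" for p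
  proof -
    have "p \<in> (\<Union>c\<in>Poly_Mapping.keys h.
        Poly_Mapping.keys (coeff_extractor \<alpha> N c (- Poly_Mapping.lookup h c / Poly_Mapping.lookup g \<alpha>)))"
      using p unfolding S_def by (rule subsetD[OF keys_sum])
    then obtain c where "c \<in> Poly_Mapping.keys h"
      and "p \<in> Poly_Mapping.keys (coeff_extractor \<alpha> N c (- Poly_Mapping.lookup h c / Poly_Mapping.lookup g \<alpha>))"
      by blast
    then show ?thesis
      using higher weight_keys_coeff_extractor h_def by fastforce
  qed
  then have "initial \<omega> (B + S) = B"
    using homogeneous \<open>B \<noteq> 0\<close> by (blast intro: initial_add_lower_weight)
  moreover from this have "B + S \<noteq> 0"
    using \<open>B \<noteq> 0\<close> by auto
  ultimately show ?thesis
    using initial_in_initial_ideal \<open>B + S \<in> Ann g\<close> by metis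
qed

section \<open>Faces of the Newton polytope\<close>

lemma finite_Supp [simp]: "finite (Supp f)"
  by (simp add: Supp_def)

lemma Supp_subset_Newton: "Supp f \<subseteq> Newton f"
  unfolding Newton_def by (rule hull_subset)

lemma expvec_in_Newton: "c \<in> Poly_Mapping.keys f \<Longrightarrow> expvec c \<in> Newton f"
  using Supp_subset_Newton by (auto simp: Supp_def)

lemma
  fixes f :: "'n::finite cpoly"
  assumes "f \<noteq> 0"
  shows ord_f_eq_Min: "ord_f f \<omega> = Min ((\<lambda>u. u \<bullet> \<omega>) ` Supp f)"
    and ord_f_le_inner: "u \<in> Newton f \<Longrightarrow> ord_f f \<omega> \<le> u \<bullet> \<omega>"
proof -
  define m where "m = Min ((\<lambda>u. u \<bullet> \<omega>) ` Supp f)"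
  have "Supp f \<noteq> {}"
    using assms by (simp add: Supp_def)
  then have m_in: "m \<in> (\<lambda>u. u \<bullet> \<omega>) ` Supp f"
    by (simp add: m_def)
  have "Newton f \<subseteq> {u. \<omega> \<bullet> u \<ge> m}"
    unfolding Newton_def
  proof (rule hull_minimal)
    show "Supp f \<subseteq> {u. \<omega> \<bullet> u \<ge> m}"
      by (auto simp: m_def inner_commute[of \<omega>])
  qed (rule convex_halfspace_ge)
  then have lower: "m \<le> u \<bullet> \<omega>" if "u \<in> Newton f" for u
    using that by (auto simp: inner_commute)
  have "ord_f f \<omega> = m"
    unfolding ord_f_def
    by (rule cInf_eq_minimum) (use m_in Supp_subset_Newton lower in auto)
  then show "ord_f f \<omega> = Min ((\<lambda>u. u \<bullet> \<omega>) ` Supp f)"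
    and "u \<in> Newton f \<Longrightarrow> ord_f f \<omega> \<le> u \<bullet> \<omega>"
    using lower by (simp_all add: m_def)
qed

lemma ord_f_attained:
  fixes f :: "'n::finite cpoly"
  assumes "f \<noteq> 0"
  obtains c where "c \<in> Poly_Mapping.keys f" "expvec c \<bullet> \<omega> = ord_f f \<omega>"
proof -
  have "Supp f \<noteq> {}"
    using assms by (simp add: Supp_def)
  then have "ord_f f \<omega> \<in> (\<lambda>u. u \<bullet> \<omega>) ` Supp f"
    by (simp add: ord_f_eq_Min[OF assms])
  then show ?thesis
    using that by (auto simp: Supp_def)
qed

lemma rel_interior_extend:
  fixes S :: "'a::euclidean_space set"
  assumes "z \<in> rel_interior S" and "x \<in> S"
  obtains t where "t > 0" and "z + t *\<^sub>R (z - x) \<in> S"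
proof -
  obtain r where "r > 0" and r: "ball z r \<inter> affine hull S \<subseteq> S"
    using assms(1) mem_rel_interior_ball by blast
  define n where "n = norm (z - x) + 1"
  have "n > 0"
    by (simp add: n_def add_nonneg_pos)
  define t where "t = r / (2 * n)"
  have "t > 0"
    using \<open>r > 0\<close> \<open>n > 0\<close> by (simp add: t_def)
  have "t * norm (z - x) \<le> t * n"
    using \<open>t > 0\<close> by (simp add: n_def)
  also have "\<dots> < r"
    using \<open>r > 0\<close> \<open>n > 0\<close> by (simp add: t_def)
  finally have "t * norm (z - x) < r" .
  then have "z + t *\<^sub>R (z - x) \<in> ball z r"
    using \<open>t > 0\<close> by (simp add: dist_norm)
  moreover have "(1 + t) *\<^sub>R z + (- t) *\<^sub>R x \<in> affine hull S"
    using assms rel_interior_subset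
    by (intro mem_affine[OF affine_affine_hull]) (auto intro: hull_inc)
  then have "z + t *\<^sub>R (z - x) \<in> affine hull S"
    by (simp add: algebra_simps)
  ultimately show ?thesis
    using r \<open>t > 0\<close> that by blast
qed

lemma face_at_rel_interior_cone_of:
  fixes f :: "'n::finite cpoly"
  assumes "f \<noteq> 0" and "\<tau> = face_at f \<omega>'" and \<omega>: "\<omega> \<in> rel_interior (cone_of f \<tau>)"
  shows "face_at f \<omega> = \<tau>"
proof
  have \<omega>_cone: "\<omega> \<in> cone_of f \<tau>"
    using \<omega> rel_interior_subset by blast
  show "\<tau> \<subseteq> face_at f \<omega>"
    using \<omega>_cone by (auto simp: assms(2) face_at_def cone_of_def)
  have "\<omega>' \<in> cone_of f \<tau>"
    by (auto simp: assms(2) face_at_def cone_of_def)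
  then obtain t where "t > 0" and \<omega>'': "\<omega> + t *\<^sub>R (\<omega> - \<omega>') \<in> cone_of f \<tau>"
    using rel_interior_extend[OF \<omega>] by blast
  obtain c where "c \<in> Poly_Mapping.keys f" and "expvec c \<bullet> \<omega>' = ord_f f \<omega>'"
    using ord_f_attained[OF assms(1)] by blast
  then have u0: "expvec c \<in> \<tau>"
    by (simp add: assms(2) face_at_def expvec_in_Newton)
  show "face_at f \<omega> \<subseteq> \<tau>"
  proof
    fix u
    assume "u \<in> face_at f \<omega>"
    then have u: "u \<in> Newton f" "u \<bullet> \<omega> = ord_f f \<omega>"
      by (auto simp: face_at_def)
    let ?\<omega>'' = "\<omega> + t *\<^sub>R (\<omega> - \<omega>')"
    have "expvec c \<bullet> ?\<omega>'' \<le> u \<bullet> ?\<omega>''"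
      using u0 \<omega>'' ord_f_le_inner[OF assms(1) u(1)] by (simp add: cone_of_def)
    moreover have "expvec c \<bullet> \<omega> = u \<bullet> \<omega>"
      using u0 \<omega>_cone u by (simp add: cone_of_def)
    \<comment> \<open>\<open>x \<bullet> ?\<omega>'' = (1 + t) (x \<bullet> \<omega>) - t (x \<bullet> \<omega>')\<close>\<close>
    ultimately have "u \<bullet> \<omega>' \<le> expvec c \<bullet> \<omega>'"
      using \<open>t > 0\<close> by (simp add: inner_add_right inner_diff_right algebra_simps)
    then show "u \<in> \<tau>"
      using u ord_f_le_inner[OF assms(1) u(1), of \<omega>'] \<open>expvec c \<bullet> \<omega>' = ord_f f \<omega>'\<close>
      by (simp add: assms(2) face_at_def)
  qed
qed

lemma face_at_eq_convex_hull:
  fixes f :: "'n::finite cpoly"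
  assumes "f \<noteq> 0"
  shows "face_at f \<omega> = convex hull (face_at f \<omega> \<inter> Supp f)"
proof -
  have "face_at f \<omega> = Newton f \<inter> {u. \<omega> \<bullet> u = ord_f f \<omega>}"
    by (auto simp: face_at_def inner_commute)
  also have "\<dots> face_of convex hull (Supp f)"
    unfolding Newton_def
    by (rule face_of_Int_supporting_hyperplane_ge)
      (use ord_f_le_inner[OF assms] in \<open>auto simp: Newton_def inner_commute\<close>)
  finally obtain S where "S \<subseteq> Supp f" and S: "face_at f \<omega> = convex hull S"
    using face_of_convex_hull_subset finite_imp_compact[OF finite_Supp] by metis
  then have "S \<subseteq> face_at f \<omega> \<inter> Supp f"
    using hull_subset[of S convex] by blast
  then have "face_at f \<omega> \<subseteq> convex hull (face_at f \<omega> \<inter> Supp f)"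
    unfolding S by (rule hull_mono)
  moreover have "convex hull (face_at f \<omega> \<inter> Supp f) \<subseteq> face_at f \<omega>"
    unfolding S by (rule hull_minimal) (auto simp: convex_convex_hull)
  ultimately show ?thesis
    by blast
qed

lemma inner_V_of_face_at:
  fixes f :: "'n::finite cpoly"
  assumes "f \<noteq> 0" and "v \<in> V_of f (face_at f \<omega>)"
    and "\<gamma> \<in> face_at f \<omega>" and "s \<in> face_at f \<omega> \<inter> Supp f"
  shows "v \<bullet> \<gamma> = v \<bullet> s"
proof -
  have "face_at f \<omega> \<inter> Supp f \<subseteq> {x. v \<bullet> x = v \<bullet> s}"
    using assms(2,4) unfolding V_of_def by blast
  then have "convex hull (face_at f \<omega> \<inter> Supp f) \<subseteq> {x. v \<bullet> x = v \<bullet> s}"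
    by (rule hull_minimal) (rule convex_hyperplane)
  then show ?thesis
    using assms(3) face_at_eq_convex_hull[OF assms(1)] by blast
qed

section \<open>Exponents of minimal weight in a power\<close>

text \<open>Unlike \<open>'n \<Rightarrow>\<^sub>0 nat\<close>, whose index type is unordered, \<open>nat \<Rightarrow>\<^sub>0 nat\<close> carries a
  lexicographic linear order compatible with addition; this embedding transports it.\<close>

definition to_nat_exponents :: "('n::finite \<Rightarrow>\<^sub>0 nat) \<Rightarrow> (nat \<Rightarrow>\<^sub>0 nat)" where
  "to_nat_exponents c = (\<Sum>i\<in>UNIV. Poly_Mapping.single (to_nat i) (Poly_Mapping.lookup c i))"

lemma to_nat_exponents_add: "to_nat_exponents (a + b) = to_nat_exponents a + to_nat_exponents b"
  by (simp add: to_nat_exponents_def lookup_add single_add sum.distrib)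

lemma to_nat_exponents_zero: "to_nat_exponents 0 = 0"
  by (simp add: to_nat_exponents_def)

lemma inj_to_nat_exponents: "inj to_nat_exponents"
proof (rule injI)
  have lookup: "Poly_Mapping.lookup (to_nat_exponents c) (to_nat i) = Poly_Mapping.lookup c i" for c i
    by (simp add: to_nat_exponents_def lookup_sum lookup_single when_def)
  fix a b :: "'n::finite \<Rightarrow>\<^sub>0 nat"
  assume "to_nat_exponents a = to_nat_exponents b"
  then show "a = b"
    by (metis lookup poly_mapping_eqI)
qed

lemma sum_list_map_eq_replicate:
  assumes "\<And>a b. \<phi> (a + b) = \<phi> a + \<phi> b" and "\<phi> 0 = 0"
    and "sum_list as = sum_list (replicate (length as) \<alpha>)"
  shows "(\<Sum>a\<leftarrow>as. \<phi> a) = (\<Sum>a\<leftarrow>as. \<phi> \<alpha>)"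
proof -
  have "(\<Sum>a\<leftarrow>as. \<phi> a) = \<phi> (sum_list (replicate (length as) \<alpha>))"
    by (simp only: sum_list_map_additive[of \<phi>, OF assms(1,2), symmetric] assms(3))
  also have "\<dots> = (\<Sum>a\<leftarrow>as. \<phi> \<alpha>)"
    by (simp add: sum_list_map_additive[of \<phi>, OF assms(1,2)] map_replicate_const)
  finally show ?thesis .
qed

lemma replicate_decomposition_lex_least:
  fixes f :: "'n::finite cpoly"
  assumes "f \<noteq> 0" and \<alpha>: "expvec \<alpha> \<bullet> \<omega> = ord_f f \<omega>"
    and least: "\<And>c. c \<in> Poly_Mapping.keys f \<Longrightarrow> expvec c \<bullet> \<omega> = ord_f f \<omega> \<Longrightarrow>
                  to_nat_exponents \<alpha> \<le> to_nat_exponents c"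
    and as: "set as \<subseteq> Poly_Mapping.keys f"
    and sum: "sum_list as = sum_list (replicate (length as) \<alpha>)"
  shows "set as \<subseteq> {\<alpha>}"
proof
  fix a
  assume "a \<in> set as"
  have lower: "ord_f f \<omega> \<le> expvec x \<bullet> \<omega>" if "x \<in> set as" for x
    using that as ord_f_le_inner[OF assms(1) expvec_in_Newton] by blast
  have "(\<Sum>x\<leftarrow>as. expvec x \<bullet> \<omega>) = (\<Sum>x\<leftarrow>as. ord_f f \<omega>)"
    using sum_list_map_eq_replicate[of "\<lambda>c. expvec c \<bullet> \<omega>", OF _ _ sum] \<alpha>
    by (simp add: expvec_add inner_add_left)
  with lower have "expvec x \<bullet> \<omega> = ord_f f \<omega>" if "x \<in> set as" for x
    using that by (rule sum_list_eq_lower_bound)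
  then have "to_nat_exponents \<alpha> \<le> to_nat_exponents x" if "x \<in> set as" for x
    using that as least by blast
  moreover have "(\<Sum>x\<leftarrow>as. to_nat_exponents x) = (\<Sum>x\<leftarrow>as. to_nat_exponents \<alpha>)"
    using to_nat_exponents_add to_nat_exponents_zero sum by (rule sum_list_map_eq_replicate)
  ultimately have "to_nat_exponents a = to_nat_exponents \<alpha>"
    using \<open>a \<in> set as\<close> by (rule sum_list_eq_lower_bound)
  then show "a \<in> {\<alpha>}"
    using inj_to_nat_exponents by (auto dest: injD)
qed

lemma exists_key_power_at_ord_f:
  fixes f :: "'n::finite cpoly"
  assumes "f \<noteq> 0"
  obtains \<beta> where "\<beta> \<in> Poly_Mapping.keys (f ^ k)" and "expvec \<beta> \<bullet> \<omega> = real k * ord_f f \<omega>"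
proof -
  define K where "K = {c \<in> Poly_Mapping.keys f. expvec c \<bullet> \<omega> = ord_f f \<omega>}"
  have "finite K" "K \<noteq> {}"
    using ord_f_attained[OF assms] by (auto simp: K_def)
  then have "Min (to_nat_exponents ` K) \<in> to_nat_exponents ` K"
    by simp
  then obtain \<alpha> where "\<alpha> \<in> K" and least: "\<And>c. c \<in> K \<Longrightarrow> to_nat_exponents \<alpha> \<le> to_nat_exponents c"
    using \<open>finite K\<close> by (metis Min_le finite_imageI image_eqI image_iff)
  have "set as \<subseteq> {\<alpha>}"
    if "set as \<subseteq> Poly_Mapping.keys f" "sum_list as = sum_list (replicate (length as) \<alpha>)" for as
    using replicate_decomposition_lex_least[OF assms, of \<alpha> \<omega> as] that \<open>\<alpha> \<in> K\<close> least
    by (simp add: K_def)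
  then have "Poly_Mapping.lookup (f ^ k) (sum_list (replicate k \<alpha>)) = Poly_Mapping.lookup f \<alpha> ^ k"
    by (rule lookup_power_sum_replicate)
  moreover have "Poly_Mapping.lookup f \<alpha> \<noteq> 0"
    using \<open>\<alpha> \<in> K\<close> by (simp add: K_def in_keys_iff)
  ultimately have "sum_list (replicate k \<alpha>) \<in> Poly_Mapping.keys (f ^ k)"
    by (simp add: in_keys_iff)
  moreover have "expvec (sum_list (replicate k \<alpha>)) \<bullet> \<omega> = real k * ord_f f \<omega>"
    using \<open>\<alpha> \<in> K\<close> by (simp add: expvec_sum_list_inner K_def sum_list_replicate)
  ultimately show ?thesis
    using that by blast
qed

lemma keys_power_face_at:
  fixes f :: "'n::finite cpoly"
  assumes "f \<noteq> 0" and "c \<in> Poly_Mapping.keys (f ^ k)"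
  obtains as where "length as = k" and "set as \<subseteq> Poly_Mapping.keys f" and "c = sum_list as"
    and "real k * ord_f f \<omega> \<le> expvec c \<bullet> \<omega>"
    and "expvec c \<bullet> \<omega> = real k * ord_f f \<omega> \<Longrightarrow> \<forall>a\<in>set as. expvec a \<in> face_at f \<omega>"
proof -
  obtain as where as: "length as = k" "set as \<subseteq> Poly_Mapping.keys f" "c = sum_list as"
    using keys_power_sum_list[OF assms(2)] by blast
  have lower: "ord_f f \<omega> \<le> expvec a \<bullet> \<omega>" if "a \<in> set as" for a
    using that as(2) ord_f_le_inner[OF assms(1) expvec_in_Newton] by blast
  have sum_ord: "(\<Sum>a\<leftarrow>as. ord_f f \<omega>) = real k * ord_f f \<omega>"
    using as(1) by (simp add: sum_list_triv)
  show ?thesis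
  proof (rule that[OF as])
    show "real k * ord_f f \<omega> \<le> expvec c \<bullet> \<omega>"
      using sum_list_mono[of as "\<lambda>_. ord_f f \<omega>", OF lower] as(3) sum_ord
      by (simp add: expvec_sum_list_inner)
    show "\<forall>a\<in>set as. expvec a \<in> face_at f \<omega>" if "expvec c \<bullet> \<omega> = real k * ord_f f \<omega>"
    proof
      fix a
      assume "a \<in> set as"
      have "(\<Sum>x\<leftarrow>as. expvec x \<bullet> \<omega>) = (\<Sum>x\<leftarrow>as. ord_f f \<omega>)"
        using that as(3) sum_ord by (simp add: expvec_sum_list_inner)
      with lower have "expvec a \<bullet> \<omega> = ord_f f \<omega>"
        using \<open>a \<in> set as\<close> by (rule sum_list_eq_lower_bound)
      then show "expvec a \<in> face_at f \<omega>"
        using \<open>a \<in> set as\<close> as(2) by (auto simp: face_at_def expvec_in_Newton)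
    qed
  qed
qed

section \<open>The operators \<open>\<partial>\<^sub>i\<^sup>m\<close> and \<open>\<Sum>\<^sub>j v\<^sub>j x\<^sub>j \<partial>\<^sub>j - c\<close>\<close>

lemma keys_weyl_act_dpow:
  "Poly_Mapping.keys (weyl_act (dpow i m) g) \<subseteq>
     {c - Poly_Mapping.single i m | c. c \<in> Poly_Mapping.keys g \<and> m \<le> Poly_Mapping.lookup c i}"
proof -
  have "Poly_Mapping.keys (weyl_act (dpow i m) g) \<subseteq> (\<Union>c\<in>Poly_Mapping.keys g.
      Poly_Mapping.keys (weyl_mono_act (0, Poly_Mapping.single i m) (Poly_Mapping.lookup g c) c))"
    unfolding dpow_def weyl_act_single by (simp add: keys_sum)
  also have "\<dots> \<subseteq> {c - Poly_Mapping.single i m | c. c \<in> Poly_Mapping.keys g \<and> m \<le> Poly_Mapping.lookup c i}"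
    by (auto simp: weyl_mono_act_def lookup_single when_def split: if_splits)
  finally show ?thesis .
qed

lemma weyl_mono_act_euler_monomial:
  "weyl_mono_act (Poly_Mapping.single j 1, Poly_Mapping.single j 1) s c
     = Poly_Mapping.single c (s * of_nat (Poly_Mapping.lookup c j))"
proof (cases "Poly_Mapping.lookup c j = 0")
  case False
  have "Poly_Mapping.single j 1 + c - Poly_Mapping.single j 1 = c"
    by (rule poly_mapping_eqI) (simp add: lookup_add lookup_minus)
  moreover have "monomial_deriv_coeff c (Poly_Mapping.single j 1) = Poly_Mapping.lookup c j"
  proof -
    have "(Poly_Mapping.lookup c i choose Poly_Mapping.lookup (Poly_Mapping.single j 1) i)
          * fact (Poly_Mapping.lookup (Poly_Mapping.single j 1) i)
        = (if i = j then Poly_Mapping.lookup c j else 1)" for i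
      by (simp add: lookup_single)
    then show ?thesis
      by (simp add: monomial_deriv_coeff_def)
  qed
  ultimately show ?thesis
    using False by (simp add: weyl_mono_act_def lookup_single when_def)
qed (auto simp: weyl_mono_act_def lookup_single when_def)

lemma weyl_act_euler_op:
  "weyl_act (euler_op v K) g =
     (\<Sum>c\<in>Poly_Mapping.keys g. Poly_Mapping.single c
        (Poly_Mapping.lookup g c * (complex_of_real (v \<bullet> expvec c) - K)))"
proof -
  have const: "weyl_mono_act (0, 0) s c = Poly_Mapping.single c s" for s c
    by (simp add: weyl_mono_act_def monomial_deriv_coeff_def)
  have "weyl_act (euler_op v K) g =
      (\<Sum>c\<in>Poly_Mapping.keys g. \<Sum>j\<in>UNIV. Poly_Mapping.single c
          (complex_of_real (v $ j) * Poly_Mapping.lookup g c * of_nat (Poly_Mapping.lookup c j)))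
      - (\<Sum>c\<in>Poly_Mapping.keys g. Poly_Mapping.single c (K * Poly_Mapping.lookup g c))"
    unfolding euler_op_def weyl_act_diff weyl_act_sum weyl_act_single weyl_mono_act_euler_monomial const
    by (simp add: sum.swap[of _ UNIV] mult_ac)
  also have "\<dots> = (\<Sum>c\<in>Poly_Mapping.keys g.
      Poly_Mapping.single c (\<Sum>j\<in>UNIV.
          complex_of_real (v $ j) * Poly_Mapping.lookup g c * of_nat (Poly_Mapping.lookup c j))
      - Poly_Mapping.single c (K * Poly_Mapping.lookup g c))"
    by (simp add: single_sum[symmetric] sum_subtractf)
  also have "\<dots> = (\<Sum>c\<in>Poly_Mapping.keys g. Poly_Mapping.single c
        (Poly_Mapping.lookup g c * (complex_of_real (v \<bullet> expvec c) - K)))"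
    by (intro sum.cong refl)
      (simp add: single_diff[symmetric] inner_vec_def expvec_def of_real_sum sum_distrib_left
        algebra_simps)
  finally show ?thesis .
qed

lemma keys_weyl_act_euler_op:
  "Poly_Mapping.keys (weyl_act (euler_op v K) g) \<subseteq>
     {c \<in> Poly_Mapping.keys g. complex_of_real (v \<bullet> expvec c) \<noteq> K}"
  unfolding weyl_act_euler_op
  by (rule order_trans[OF keys_sum]) (auto simp: in_keys_iff)

lemma weight_keys_euler_op:
  assumes "p \<in> Poly_Mapping.keys (euler_op v K)"
  shows "weight \<omega> p = 0"
proof -
  have "Poly_Mapping.keys (euler_op v K) \<subseteq>
      (\<Union>j. Poly_Mapping.keys (Poly_Mapping.single (Poly_Mapping.single j 1, Poly_Mapping.single j (1::nat))
                                 (complex_of_real (v $ j))))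
      \<union> Poly_Mapping.keys (Poly_Mapping.single (0, 0) K)"
    unfolding euler_op_def by (rule order_trans[OF keys_diff Un_mono[OF keys_sum order_refl]])
  with assms show ?thesis
    by (auto simp: weight_eq split: if_splits)
qed

lemma lookup_le_lam:
  assumes "a \<in> Poly_Mapping.keys f" and "expvec a \<in> \<tau>"
  shows "Poly_Mapping.lookup a i \<le> lam f \<tau> i"
proof -
  have "{Poly_Mapping.lookup a i | a. a \<in> Poly_Mapping.keys f \<and> expvec a \<in> \<tau>}
      \<subseteq> (\<lambda>a. Poly_Mapping.lookup a i) ` Poly_Mapping.keys f"
    by blast
  then show ?thesis
    unfolding lam_def using assms by (intro Max_ge) (auto intro: finite_subset)
qed

lemma dpow_in_initial_Ann:
  fixes f :: "'n::finite cpoly"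
  assumes "f \<noteq> 0"
  shows "dpow i (l * lam f (face_at f \<omega>) i + 1) \<in> initial_ideal \<omega> (Ann (f ^ l))"
proof -
  define lam_i where "lam_i = lam f (face_at f \<omega>) i"
  define m where "m = l * lam_i + 1"
  obtain \<alpha> where \<alpha>: "\<alpha> \<in> Poly_Mapping.keys (f ^ l)" "expvec \<alpha> \<bullet> \<omega> = real l * ord_f f \<omega>"
    using exists_key_power_at_ord_f[OF assms] by blast
  have "expvec \<alpha> \<bullet> \<omega> - real m * \<omega> $ i < expvec c' \<bullet> \<omega>"
    if key: "c' \<in> Poly_Mapping.keys (weyl_act (dpow i m) (f ^ l))" for c'
  proof -
    obtain c where c: "c \<in> Poly_Mapping.keys (f ^ l)" "m \<le> Poly_Mapping.lookup c i"
      and c': "c' = c - Poly_Mapping.single i m"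
      using key keys_weyl_act_dpow by blast
    obtain as where as: "length as = l" "set as \<subseteq> Poly_Mapping.keys f" "c = sum_list as"
      and lower: "real l * ord_f f \<omega> \<le> expvec c \<bullet> \<omega>"
      and face: "expvec c \<bullet> \<omega> = real l * ord_f f \<omega> \<Longrightarrow> \<forall>a\<in>set as. expvec a \<in> face_at f \<omega>"
      using keys_power_face_at[OF assms c(1)] by blast
    have "expvec c \<bullet> \<omega> \<noteq> real l * ord_f f \<omega>"
    proof
      assume "expvec c \<bullet> \<omega> = real l * ord_f f \<omega>"
      then have "(\<Sum>a\<leftarrow>as. Poly_Mapping.lookup a i) \<le> (\<Sum>a\<leftarrow>as. lam_i)"
        using face as(2) lookup_le_lam unfolding lam_i_def by (intro sum_list_mono) blast
      then have "Poly_Mapping.lookup c i \<le> l * lam_i"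
        by (simp add: as lookup_sum_list sum_list_triv)
      with c(2) show False
        by (simp add: m_def)
    qed
    with lower show ?thesis
      by (simp add: c' c(2) inner_expvec_diff_single \<alpha>(2))
  qed
  moreover have "dpow i m \<noteq> 0"
    by (metis dpow_def lookup_single_eq lookup_zero one_neq_zero)
  moreover have "\<forall>p\<in>Poly_Mapping.keys (dpow i m). weight \<omega> p = real m * \<omega> $ i"
    by (simp add: dpow_def weight_eq inner_expvec_single)
  ultimately show ?thesis
    unfolding m_def lam_i_def using homogeneous_in_initial_Ann[OF \<alpha>(1)] by blast
qed

lemma euler_op_in_initial_Ann:
  fixes f :: "'n::finite cpoly"
  assumes "f \<noteq> 0" and v: "v \<in> V_of f (face_at f \<omega>)" and \<gamma>: "\<gamma> \<in> face_at f \<omega>"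
  shows "euler_op v (complex_of_real (real l * (v \<bullet> \<gamma>))) \<in> initial_ideal \<omega> (Ann (f ^ l))"
proof (cases "euler_op v (complex_of_real (real l * (v \<bullet> \<gamma>))) = 0")
  case True
  then show ?thesis
    by (simp add: initial_ideal_def left_ideal_gen.zero)
next
  case False
  obtain \<alpha> where \<alpha>: "\<alpha> \<in> Poly_Mapping.keys (f ^ l)" "expvec \<alpha> \<bullet> \<omega> = real l * ord_f f \<omega>"
    using exists_key_power_at_ord_f[OF assms(1)] by blast
  have "expvec \<alpha> \<bullet> \<omega> - 0 < expvec c \<bullet> \<omega>"
    if "c \<in> Poly_Mapping.keys (weyl_act (euler_op v (complex_of_real (real l * (v \<bullet> \<gamma>)))) (f ^ l))" for c
  proof -
    have c: "c \<in> Poly_Mapping.keys (f ^ l)" "v \<bullet> expvec c \<noteq> real l * (v \<bullet> \<gamma>)"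
      using that keys_weyl_act_euler_op by (fastforce simp: of_real_eq_iff)+
    obtain as where as: "length as = l" "set as \<subseteq> Poly_Mapping.keys f" "c = sum_list as"
      and lower: "real l * ord_f f \<omega> \<le> expvec c \<bullet> \<omega>"
      and face: "expvec c \<bullet> \<omega> = real l * ord_f f \<omega> \<Longrightarrow> \<forall>a\<in>set as. expvec a \<in> face_at f \<omega>"
      using keys_power_face_at[OF assms(1) c(1)] by blast
    have "expvec c \<bullet> \<omega> \<noteq> real l * ord_f f \<omega>"
    proof
      assume "expvec c \<bullet> \<omega> = real l * ord_f f \<omega>"
      then have "expvec a \<bullet> v = v \<bullet> \<gamma>" if "a \<in> set as" for a
        using face that as(2) inner_V_of_face_at[OF assms(1) v \<gamma>, of "expvec a"]
        by (auto simp: Supp_def inner_commute)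
      then have "v \<bullet> expvec c = real l * (v \<bullet> \<gamma>)"
        by (simp add: inner_commute[of v] as expvec_sum_list_inner sum_list_triv cong: map_cong)
      with c(2) show False ..
    qed
    with lower show ?thesis
      using \<alpha>(2) by simp
  qed
  moreover have "\<forall>p\<in>Poly_Mapping.keys (euler_op v (complex_of_real (real l * (v \<bullet> \<gamma>)))). weight \<omega> p = 0"
    using weight_keys_euler_op by blast
  ultimately show ?thesis
    using homogeneous_in_initial_Ann[OF \<alpha>(1) False] by blast
qed

theorem mainTheorem5:
  fixes f :: "'n::finite cpoly" and l :: nat and \<tau> :: "(real^'n) set" and \<omega> :: "real^'n"
  assumes "f \<noteq> 0"
    and "is_face f \<tau>"
    and "\<omega> \<in> rel_interior (cone_of f \<tau>)"
    and "\<omega> \<noteq> 0"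
  shows "(\<forall>i. dpow i (l * lam f \<tau> i + 1) \<in> initial_ideal \<omega> (Ann (f ^ l)))
    \<and> (\<forall>v\<in>V_of f \<tau>. \<forall>\<gamma>\<in>\<tau>.
         euler_op v (complex_of_real (real l * (v \<bullet> \<gamma>))) \<in> initial_ideal \<omega> (Ann (f ^ l)))"
proof -
  obtain \<omega>' where "\<tau> = face_at f \<omega>'"
    using assms(2) by (auto simp: is_face_def)
  then have "face_at f \<omega> = \<tau>"
    using assms(1,3) by (intro face_at_rel_interior_cone_of)
  then show ?thesis
    using dpow_in_initial_Ann[OF assms(1)] euler_op_in_initial_Ann[OF assms(1)] by auto
qed

end
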